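(* Let $\mathbf{k}$ be an algebraically closed field of characteristic zero, $\mathcal{A}=\mathbf{k}[x_1,\ldots,x_n]$, and let $\mathcal{L}_+$ be the Lie algebra of polynomial vector fields on $\mathbb{A}^n$ vanishing at the origin. Let $U$ be a finite-dimensional $\mathbf{k}$-vector space and let $\rho$ be an $\mathcal{A}$-linear representation of $\mathcal{L}_+$ on $\mathcal{A}\otimes_{\mathbf{k}}U$. Then for each $i\in\{1,\ldots,n\}$ there are only finitely many $k\in\mathbb{Z}^n_{\geq0}\setminus\{0\}$ for which $\rho\left(x^k\frac{\partial}{\partial x_i}\right)\neq 0$.
   Context: $\mathcal{L}_+$ is spanned by $x^k\frac{\partial}{\partial x_i}$ with $k\in\mathbb{Z}^n_{\ge0}\setminus\{0\}$, where $x^k=x_1^{k_1}\cdots x_n^{k_n}$. An $\mathcal{A}$-linear representation of $\mathcal{L}_+$ on $\mathcal{A}\otimes U$ is a Lie algebra homomorphism $\rho:\mathcal{L}_+\to\mathrm{End}_{\mathcal{A}}(\mathcal{A}\otimes U)$. *)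

theory Defs
  imports "HOL-Library.Poly_Mapping" "HOL-Computational_Algebra.Polynomial"
begin

text \<open>Multivariate polynomials k[x_i : i in 'n] as finitely supported maps from
 exponent vectors ('n =>0 nat) to coefficients.\<close>
type_synonym ('n, 'k) mpoly = "('n \<Rightarrow>\<^sub>0 nat) \<Rightarrow>\<^sub>0 'k"

definition alg_closed_field :: "'k::field itself \<Rightarrow> bool" where
  "alg_closed_field _ \<longleftrightarrow> (\<forall>p :: 'k poly. Polynomial.degree p \<noteq> 0 \<longrightarrow> (\<exists>x. poly p x = 0))"

definition mconst :: "'k::zero \<Rightarrow> ('n, 'k) mpoly" where
  "mconst c = Poly_Mapping.single 0 c"

definition pderiv_var :: "'n \<Rightarrow> ('n, 'k::comm_ring_1) mpoly \<Rightarrow> ('n, 'k) mpoly" where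
  "pderiv_var i p = (\<Sum>m\<in>Poly_Mapping.keys p.
      Poly_Mapping.single (m - Poly_Mapping.single i 1) (of_nat (Poly_Mapping.lookup m i) * Poly_Mapping.lookup p m))"

text \<open>Polynomial vector fields sum_i X_i d/dx_i, represented by their coefficient
  functions X :: 'n => polynomial.\<close>
type_synonym ('n, 'k) vfield = "'n \<Rightarrow> ('n, 'k) mpoly"

definition vf_bracket :: "('n::finite, 'k::comm_ring_1) vfield \<Rightarrow> ('n, 'k) vfield \<Rightarrow> ('n, 'k) vfield" where
  "vf_bracket X Y = (\<lambda>j. \<Sum>i\<in>UNIV. X i * pderiv_var i (Y j) - Y i * pderiv_var i (X j))"

definition Lplus :: "('n::finite, 'k::comm_ring_1) vfield set" where
  "Lplus = {X. \<forall>i. Poly_Mapping.lookup (X i) 0 = 0}"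

definition monvf :: "('n \<Rightarrow>\<^sub>0 nat) \<Rightarrow> 'n \<Rightarrow> ('n, 'k::comm_ring_1) vfield" where
  "monvf k i = (\<lambda>j. if j = i then Poly_Mapping.single k 1 else 0)"

text \<open>A-linear representation of L_+ on A \<otimes> U, U = k^'m (basis indexed by the
  finite type 'm), so that A \<otimes> U = ('m => A).  rho X is an A-linear endomorphism;
  rho is k-linear on L_+ and preserves brackets.\<close>
definition A_linear_rep ::
  "(('n::finite, 'k::comm_ring_1) vfield \<Rightarrow> ('m \<Rightarrow> ('n, 'k) mpoly) \<Rightarrow> ('m \<Rightarrow> ('n, 'k) mpoly)) \<Rightarrow> bool" where
  "A_linear_rep \<rho> \<longleftrightarrow>
     (\<forall>X\<in>Lplus. \<forall>v w. \<rho> X (\<lambda>j. v j + w j) = (\<lambda>j. \<rho> X v j + \<rho> X w j)) \<and>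
     (\<forall>X\<in>Lplus. \<forall>a v. \<rho> X (\<lambda>j. a * v j) = (\<lambda>j. a * \<rho> X v j)) \<and>
     (\<forall>X\<in>Lplus. \<forall>Y\<in>Lplus. \<forall>c d. \<rho> (\<lambda>i. mconst c * X i + mconst d * Y i)
          = (\<lambda>v j. mconst c * \<rho> X v j + mconst d * \<rho> Y v j)) \<and>
     (\<forall>X\<in>Lplus. \<forall>Y\<in>Lplus. \<rho> (vf_bracket X Y)
          = (\<lambda>v j. \<rho> X (\<rho> Y v) j - \<rho> Y (\<rho> X v) j))"

end

theory Submission
  imports Defs "Jordan_Normal_Form.Char_Poly"
begin

text \<open>The Euler field \<open>E = \<Sum>\<^sub>j x\<^sub>j \<partial>\<^sub>j\<close> satisfies \<open>[E, x\<^sup>k \<partial>\<^sub>i] = (|k| - 1) x\<^sup>k \<partial>\<^sub>i\<close>.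
  In the standard basis of \<open>U\<close> this says \<open>(|k| - 1) N = M N - N M\<close>, where \<open>M\<close> and \<open>N\<close> are
  the matrices over \<open>A\<close> of \<open>\<rho>(E)\<close> and \<open>\<rho>(x\<^sup>k \<partial>\<^sub>i)\<close>. If \<open>N \<noteq> 0\<close>, comparing coefficients at a
  monomial of least total degree occurring in \<open>N\<close> leaves only the constant term \<open>M\<^sub>0\<close> of \<open>M\<close>,
  so \<open>|k| - 1\<close> is an eigenvalue of \<open>ad M\<^sub>0\<close> on \<open>m \<times> m\<close> matrices. There are finitely many
  such eigenvalues, so in characteristic zero \<open>|k|\<close> is bounded.\<close>

lemma finite_eigenvalues:
  fixes L :: "'a::finite \<Rightarrow> 'a \<Rightarrow> 'k::field"
  shows "finite {c. \<exists>v. v \<noteq> (\<lambda>_. 0) \<and> (\<forall>a. (\<Sum>b\<in>UNIV. L a b * v b) = c * v a)}"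
proof -
  define d where "d = card (UNIV :: 'a set)"
  obtain h where h: "bij_betw h {0..<d} (UNIV :: 'a set)"
    using ex_bij_betw_nat_finite[of "UNIV :: 'a set"] unfolding d_def by auto
  define A where "A = mat d d (\<lambda>(i, j). L (h i) (h j))"
  have A: "A \<in> carrier_mat d d"
    unfolding A_def by simp
  have "{c. \<exists>v. v \<noteq> (\<lambda>_. 0) \<and> (\<forall>a. (\<Sum>b\<in>UNIV. L a b * v b) = c * v a)}
      \<subseteq> {c. poly (char_poly A) c = 0}"
  proof
    fix c
    assume "c \<in> {c. \<exists>v. v \<noteq> (\<lambda>_. 0) \<and> (\<forall>a. (\<Sum>b\<in>UNIV. L a b * v b) = c * v a)}"
    then obtain v where v0: "v \<noteq> (\<lambda>_. 0)" and Lv: "\<And>a. (\<Sum>b\<in>UNIV. L a b * v b) = c * v a"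
      by blast
    define w where "w = vec d (\<lambda>i. v (h i))"
    have w: "w \<in> carrier_vec d"
      unfolding w_def by simp
    have w0: "w \<noteq> 0\<^sub>v d"
    proof
      assume "w = 0\<^sub>v d"
      then have "v (h i) = 0" if "i < d" for i
        using that by (metis w_def index_vec index_zero_vec(1))
      moreover have "b \<in> h ` {0..<d}" for b
        using bij_betw_imp_surj_on[OF h] by simp
      ultimately have "v = (\<lambda>_. 0)"
        by (intro ext) (metis atLeastLessThan_iff imageE)
      then show False
        using v0 by simp
    qed
    have "A *\<^sub>v w = c \<cdot>\<^sub>v w"
    proof (rule eq_vecI)
      fix i
      assume "i < dim_vec (c \<cdot>\<^sub>v w)"
      then have i: "i < d"
        by (simp add: w_def)
      have "(A *\<^sub>v w) $ i = (\<Sum>j\<in>{0..<d}. L (h i) (h j) * v (h j))"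
        using i by (simp add: A_def w_def scalar_prod_def)
      also have "\<dots> = (\<Sum>b\<in>UNIV. L (h i) b * v b)"
        using sum.reindex_bij_betw[OF h, of "\<lambda>b. L (h i) b * v b"] by simp
      also have "\<dots> = (c \<cdot>\<^sub>v w) $ i"
        using i Lv by (simp add: w_def)
      finally show "(A *\<^sub>v w) $ i = (c \<cdot>\<^sub>v w) $ i" .
    qed (simp add: A_def w_def)
    then have "eigenvalue A c"
      unfolding eigenvalue_def eigenvector_def using A w w0 by blast
    then show "c \<in> {c. poly (char_poly A) c = 0}"
      using eigenvalue_root_char_poly[OF A] by simp
  qed
  moreover have "char_poly A \<noteq> 0"
    using degree_monic_char_poly[OF A] by auto
  ultimately show ?thesis
    using poly_roots_finite finite_subset by blast
qed

definition ad_eigenvalues :: "('m::finite \<Rightarrow> 'm \<Rightarrow> 'k::comm_ring_1) \<Rightarrow> 'k set" where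
  "ad_eigenvalues M = {c. \<exists>N. N \<noteq> (\<lambda>j l. 0) \<and>
     (\<forall>j l. c * N j l = (\<Sum>t\<in>UNIV. M j t * N t l) - (\<Sum>t\<in>UNIV. N j t * M t l))}"

lemma finite_ad_eigenvalues:
  fixes M :: "'m::finite \<Rightarrow> 'm \<Rightarrow> 'k::field"
  shows "finite (ad_eigenvalues M)"
proof -
  \<comment> \<open>the matrix of \<open>N \<mapsto> M N - N M\<close>, indexed by pairs\<close>
  define L :: "'m \<times> 'm \<Rightarrow> 'm \<times> 'm \<Rightarrow> 'k" where
    "L = (\<lambda>(j, l) (t, s). (if s = l then M j t else 0) - (if t = j then M s l else 0))"
  have "ad_eigenvalues M \<subseteq> {c. \<exists>v. v \<noteq> (\<lambda>_. 0) \<and> (\<forall>a. (\<Sum>b\<in>UNIV. L a b * v b) = c * v a)}"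
  proof
    fix c
    assume "c \<in> ad_eigenvalues M"
    then obtain N where N0: "N \<noteq> (\<lambda>j l. 0)"
      and N: "\<And>j l. c * N j l = (\<Sum>t\<in>UNIV. M j t * N t l) - (\<Sum>t\<in>UNIV. N j t * M t l)"
      unfolding ad_eigenvalues_def by blast
    have "(\<Sum>b\<in>UNIV. L a b * case_prod N b) = c * case_prod N a" for a
    proof (cases a)
      case (Pair j l)
      have "(\<Sum>b\<in>UNIV. L a b * case_prod N b) = (\<Sum>t\<in>UNIV. \<Sum>s\<in>UNIV. L (j, l) (t, s) * N t s)"
        by (simp add: Pair UNIV_Times_UNIV[symmetric] sum.cartesian_product case_prod_unfold
            del: UNIV_Times_UNIV)
      also have "\<dots> = (\<Sum>t\<in>UNIV. \<Sum>s\<in>UNIV.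
          (if s = l then M j t * N t s else 0) - (if t = j then N t s * M s l else 0))"
        unfolding L_def by (intro sum.cong refl) (auto simp: algebra_simps)
      also have "\<dots> = (\<Sum>t\<in>UNIV. M j t * N t l) - (\<Sum>s\<in>UNIV. N j s * M s l)"
        by (simp add: sum_subtractf) (subst sum.swap, simp)
      also have "\<dots> = c * case_prod N a"
        using N Pair by simp
      finally show ?thesis .
    qed
    moreover have "case_prod N \<noteq> (\<lambda>_. 0)"
      using N0 by (metis case_prod_conv)
    ultimately show "c \<in> {c. \<exists>v. v \<noteq> (\<lambda>_. 0) \<and> (\<forall>a. (\<Sum>b\<in>UNIV. L a b * v b) = c * v a)}"
      by blast
  qed
  then show ?thesis
    using finite_eigenvalues finite_subset by blast
qed

definition total_degree :: "('n::finite \<Rightarrow>\<^sub>0 nat) \<Rightarrow> nat" where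
  "total_degree a = (\<Sum>j\<in>UNIV. Poly_Mapping.lookup a j)"

lemma total_degree_add: "total_degree (a + b) = total_degree a + total_degree b"
  unfolding total_degree_def by (simp add: lookup_add sum.distrib)

lemma total_degree_pos:
  assumes "a \<noteq> 0"
  shows "0 < total_degree a"
proof -
  obtain j where "Poly_Mapping.lookup a j \<noteq> 0"
    using assms by (metis lookup_zero poly_mapping_eqI)
  then show ?thesis
    unfolding total_degree_def by (metis UNIV_I finite_class.finite_UNIV gr0I sum_eq_0_iff)
qed

lemma finite_total_degree_le: "finite {a :: 'n::finite \<Rightarrow>\<^sub>0 nat. total_degree a \<le> d}"
proof -
  have "Poly_Mapping.lookup a j \<le> d" if "total_degree a \<le> d" for a :: "'n \<Rightarrow>\<^sub>0 nat" and j
    using that member_le_sum[of j UNIV "Poly_Mapping.lookup a"] unfolding total_degree_def by simp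
  then have "Poly_Mapping.lookup ` {a :: 'n \<Rightarrow>\<^sub>0 nat. total_degree a \<le> d} \<subseteq> PiE UNIV (\<lambda>_. {..d})"
    by (auto simp: PiE_def extensional_def)
  then have "finite (Poly_Mapping.lookup ` {a :: 'n \<Rightarrow>\<^sub>0 nat. total_degree a \<le> d})"
    by (rule finite_subset) (simp add: finite_PiE)
  then show ?thesis
    by (rule finite_imageD) (simp add: inj_on_def)
qed

lemma lookup_mconst_mult: "Poly_Mapping.lookup (mconst c * p) a = c * Poly_Mapping.lookup p a"
  unfolding mconst_def
  by (simp add: mult_map_scale_conv_mult[symmetric] Poly_Mapping.map.rep_eq when_def)

lemma mconst_mult_single: "mconst (c::'k::comm_ring_1) * Poly_Mapping.single a 1 = Poly_Mapping.single a c"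
  by (simp only: mconst_def mult_single add_0 mult_1_right)

lemma lookup_mult_lowest_degree:
  fixes p q :: "('n::finite, 'k::comm_ring_1) mpoly"
  assumes "\<forall>b\<in>Poly_Mapping.keys q. total_degree a \<le> total_degree b"
  shows "Poly_Mapping.lookup (p * q) a = Poly_Mapping.lookup p 0 * Poly_Mapping.lookup q a"
proof -
  define r where "r = p - mconst (Poly_Mapping.lookup p 0)"
  have "Poly_Mapping.lookup (r * q) a = 0"
  proof (rule ccontr)
    assume "Poly_Mapping.lookup (r * q) a \<noteq> 0"
    then have "a \<in> Poly_Mapping.keys (r * q)"
      by (simp add: in_keys_iff)
    then obtain a' b where a: "a = a' + b" and "a' \<in> Poly_Mapping.keys r" and b: "b \<in> Poly_Mapping.keys q"
      using keys_mult by blast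
    then have "a' \<noteq> 0"
      by (auto simp: r_def mconst_def in_keys_iff lookup_minus)
    then have "total_degree b < total_degree a"
      using total_degree_pos a by (simp add: total_degree_add)
    then show False
      using assms b by force
  qed
  moreover have "p * q = mconst (Poly_Mapping.lookup p 0) * q + r * q"
    by (simp add: r_def algebra_simps)
  ultimately show ?thesis
    by (simp add: lookup_add lookup_mconst_mult)
qed

definition euler_field :: "('n::finite, 'k::comm_ring_1) vfield" where
  "euler_field = (\<lambda>j. Poly_Mapping.single (Poly_Mapping.single j 1) 1)"

lemma euler_field_Lplus: "euler_field \<in> Lplus"
  unfolding euler_field_def Lplus_def
  by (intro CollectI allI lookup_single_not_eq) (metis lookup_single_eq lookup_zero one_neq_zero)

lemma monvf_Lplus: "k \<noteq> 0 \<Longrightarrow> monvf k i \<in> Lplus"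
  unfolding monvf_def Lplus_def by (simp add: lookup_single when_def)

lemma pderiv_var_single:
  "pderiv_var i (Poly_Mapping.single a (1::'k::comm_ring_1)) =
     Poly_Mapping.single (a - Poly_Mapping.single i 1) (of_nat (Poly_Mapping.lookup a i))"
  unfolding pderiv_var_def by simp

lemma pderiv_var_zero: "pderiv_var i 0 = 0"
  unfolding pderiv_var_def by simp

lemma pderiv_var_euler_field: "pderiv_var l (euler_field j) = (if l = j then 1 else 0)"
  unfolding euler_field_def pderiv_var_single by (auto simp: lookup_single when_def)

lemma euler_field_apply_single:
  "(\<Sum>l\<in>UNIV. euler_field l * pderiv_var l (Poly_Mapping.single a 1)) =
     Poly_Mapping.single a (of_nat (total_degree a) :: 'k::comm_ring_1)"
proof -
  have monomial: "euler_field l * pderiv_var l (Poly_Mapping.single a 1) =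
      Poly_Mapping.single a (of_nat (Poly_Mapping.lookup a l) :: 'k)" for l
  proof (cases "Poly_Mapping.lookup a l = 0")
    case False
    then have "Poly_Mapping.single l 1 + (a - Poly_Mapping.single l 1) = a"
      by (intro poly_mapping_eqI) (auto simp: lookup_add lookup_minus lookup_single when_def)
    then show ?thesis
      by (simp add: euler_field_def pderiv_var_single mult_single)
  qed (simp add: pderiv_var_single)
  have "(\<Sum>l\<in>UNIV. Poly_Mapping.single a (f l)) = Poly_Mapping.single a (\<Sum>l\<in>UNIV. f l)"
    for f :: "'n \<Rightarrow> 'k"
    by (intro poly_mapping_eqI) (simp add: lookup_sum lookup_single when_def)
  then show ?thesis
    by (simp add: monomial total_degree_def)
qed

lemma vf_bracket_euler_field_monvf:
  "vf_bracket euler_field (monvf k i) =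
     (\<lambda>j. mconst (of_nat (total_degree k) - 1) * (monvf k i j :: ('n::finite, 'k::comm_ring_1) mpoly))"
proof
  fix j
  have "vf_bracket euler_field (monvf k i) j =
      (\<Sum>l\<in>UNIV. euler_field l * pderiv_var l (monvf k i j)) - monvf k i j"
    unfolding vf_bracket_def sum_subtractf
    by (simp add: pderiv_var_euler_field if_distrib cong: if_cong)
  also have "\<dots> = mconst (of_nat (total_degree k) - 1) * monvf k i j"
    by (simp add: monvf_def euler_field_apply_single pderiv_var_zero mconst_mult_single
        single_diff)
  finally show "vf_bracket euler_field (monvf k i) j = mconst (of_nat (total_degree k) - 1) * monvf k i j" .
qed

definition ebasis :: "'m \<Rightarrow> 'm \<Rightarrow> ('n, 'k::comm_ring_1) mpoly" where
  "ebasis l = (\<lambda>t. if t = l then 1 else 0)"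

lemma A_linear_rep_add:
  assumes "A_linear_rep \<rho>" and "Y \<in> Lplus"
  shows "\<rho> Y (\<lambda>j. v j + w j) = (\<lambda>j. \<rho> Y v j + \<rho> Y w j)"
  using assms unfolding A_linear_rep_def by blast

lemma A_linear_rep_mult:
  assumes "A_linear_rep \<rho>" and "Y \<in> Lplus"
  shows "\<rho> Y (\<lambda>j. a * v j) = (\<lambda>j. a * \<rho> Y v j)"
  using assms unfolding A_linear_rep_def by blast

lemma A_linear_rep_mconst_mult:
  assumes "A_linear_rep \<rho>" and "X \<in> Lplus"
  shows "\<rho> (\<lambda>i. mconst c * X i) = (\<lambda>v j. mconst c * \<rho> X v j)"
proof -
  have "\<rho> (\<lambda>i. mconst c * X i + mconst 0 * X i) = (\<lambda>v j. mconst c * \<rho> X v j + mconst 0 * \<rho> X v j)"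
    using assms unfolding A_linear_rep_def by blast
  then show ?thesis
    by (simp add: mconst_def)
qed

lemma A_linear_rep_bracket:
  assumes "A_linear_rep \<rho>" and "X \<in> Lplus" and "Y \<in> Lplus"
  shows "\<rho> (vf_bracket X Y) = (\<lambda>v j. \<rho> X (\<rho> Y v) j - \<rho> Y (\<rho> X v) j)"
  using assms unfolding A_linear_rep_def by blast

lemma A_linear_rep_sum:
  assumes rep: "A_linear_rep \<rho>" and Y: "Y \<in> Lplus" and "finite S"
  shows "\<rho> Y (\<lambda>j. \<Sum>l\<in>S. f l j) = (\<lambda>j. \<Sum>l\<in>S. \<rho> Y (f l) j)"
  using \<open>finite S\<close>
proof (induction S rule: finite_induct)
  case empty
  have "\<rho> Y (\<lambda>j. 0 * 0) = (\<lambda>j. 0 * \<rho> Y (\<lambda>_. 0) j)"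
    by (rule A_linear_rep_mult[OF rep Y])
  then show ?case
    by simp
next
  case (insert x F)
  then show ?case
    by (simp add: A_linear_rep_add[OF rep Y])
qed

lemma A_linear_rep_matrix:
  fixes \<rho> :: "('n::finite, 'k::comm_ring_1) vfield \<Rightarrow> ('m::finite \<Rightarrow> ('n, 'k) mpoly) \<Rightarrow> ('m \<Rightarrow> ('n, 'k) mpoly)"
  assumes rep: "A_linear_rep \<rho>" and Y: "Y \<in> Lplus"
  shows "\<rho> Y v j = (\<Sum>l\<in>UNIV. \<rho> Y (ebasis l) j * v l)"
proof -
  have "v = (\<lambda>j. \<Sum>l\<in>UNIV. v l * ebasis l j)"
    by (auto simp: ebasis_def if_distrib cong: if_cong)
  then have "\<rho> Y v = (\<lambda>j. \<Sum>l\<in>UNIV. \<rho> Y (\<lambda>t. v l * ebasis l t) j)"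
    using A_linear_rep_sum[OF rep Y finite_UNIV, of "\<lambda>l t. v l * ebasis l t"] by simp
  then show ?thesis
    by (simp add: A_linear_rep_mult[OF rep Y] mult.commute)
qed

lemma ad_eigenvalues_lowest_coeff:
  fixes M N :: "'m::finite \<Rightarrow> 'm \<Rightarrow> ('n::finite, 'k::comm_ring_1) mpoly"
  assumes N0: "N \<noteq> (\<lambda>j l. 0)"
    and MN: "\<And>j l. mconst c * N j l = (\<Sum>t\<in>UNIV. M j t * N t l) - (\<Sum>t\<in>UNIV. N j t * M t l)"
  shows "c \<in> ad_eigenvalues (\<lambda>j t. Poly_Mapping.lookup (M j t) 0)"
proof -
  obtain a0 j0 l0 where "a0 \<in> Poly_Mapping.keys (N j0 l0)"
    using N0 by (metis in_keys_iff lookup_zero poly_mapping_eqI)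
  then obtain a where a: "\<exists>j l. a \<in> Poly_Mapping.keys (N j l)"
    and lowest: "\<And>b j l. b \<in> Poly_Mapping.keys (N j l) \<Longrightarrow> total_degree a \<le> total_degree b"
    using ex_has_least_nat[of "\<lambda>b. \<exists>j l. b \<in> Poly_Mapping.keys (N j l)" a0 total_degree] by blast
  define Na where "Na = (\<lambda>j l. Poly_Mapping.lookup (N j l) a)"
  have low: "Poly_Mapping.lookup (p * N j l) a = Poly_Mapping.lookup p 0 * Na j l"
    "Poly_Mapping.lookup (N j l * p) a = Na j l * Poly_Mapping.lookup p 0" for p j l
    using lookup_mult_lowest_degree[of "N j l" a p] lowest by (auto simp: Na_def mult.commute)
  have "c * Na j l = (\<Sum>t\<in>UNIV. Poly_Mapping.lookup (M j t) 0 * Na t l)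
      - (\<Sum>t\<in>UNIV. Na j t * Poly_Mapping.lookup (M t l) 0)" for j l
  proof -
    have "c * Na j l = Poly_Mapping.lookup (mconst c * N j l) a"
      by (simp add: Na_def lookup_mconst_mult)
    also have "\<dots> = Poly_Mapping.lookup (\<Sum>t\<in>UNIV. M j t * N t l) a
        - Poly_Mapping.lookup (\<Sum>t\<in>UNIV. N j t * M t l) a"
      by (simp add: MN lookup_minus)
    finally show ?thesis
      by (simp add: lookup_sum low)
  qed
  moreover have "Na \<noteq> (\<lambda>j l. 0)"
    using a by (auto simp: Na_def in_keys_iff fun_eq_iff)
  ultimately show ?thesis
    unfolding ad_eigenvalues_def by blast
qed

lemma total_degree_ad_eigenvalue:
  fixes \<rho> :: "('n::finite, 'k::comm_ring_1) vfield \<Rightarrow> ('m::finite \<Rightarrow> ('n, 'k) mpoly) \<Rightarrow> ('m \<Rightarrow> ('n, 'k) mpoly)"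
  assumes rep: "A_linear_rep \<rho>" and "k \<noteq> 0" and nonzero: "\<rho> (monvf k i) \<noteq> (\<lambda>v j. 0)"
  shows "of_nat (total_degree k) - 1
    \<in> ad_eigenvalues (\<lambda>j t. Poly_Mapping.lookup (\<rho> euler_field (ebasis t) j) 0)"
proof -
  define X :: "('n, 'k) vfield" where "X = monvf k i"
  have X: "X \<in> Lplus"
    unfolding X_def using \<open>k \<noteq> 0\<close> by (rule monvf_Lplus)
  define M where "M = (\<lambda>j t. \<rho> euler_field (ebasis t) j)"
  define N where "N = (\<lambda>j t. \<rho> X (ebasis t) j)"
  have "mconst (of_nat (total_degree k) - 1) * N j l
      = (\<Sum>t\<in>UNIV. M j t * N t l) - (\<Sum>t\<in>UNIV. N j t * M t l)" for j l
  proof -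
    have "mconst (of_nat (total_degree k) - 1) * N j l = \<rho> (vf_bracket euler_field X) (ebasis l) j"
      using A_linear_rep_mconst_mult[OF rep X]
      by (simp add: N_def X_def vf_bracket_euler_field_monvf)
    also have "\<dots> = \<rho> euler_field (\<rho> X (ebasis l)) j - \<rho> X (\<rho> euler_field (ebasis l)) j"
      by (simp add: A_linear_rep_bracket[OF rep euler_field_Lplus X])
    also have "\<dots> = (\<Sum>t\<in>UNIV. M j t * N t l) - (\<Sum>t\<in>UNIV. N j t * M t l)"
      unfolding M_def N_def
      by (simp add: A_linear_rep_matrix[OF rep euler_field_Lplus, of "\<rho> X (ebasis l)"]
          A_linear_rep_matrix[OF rep X, of "\<rho> euler_field (ebasis l)"])
    finally show ?thesis .
  qed
  moreover have "N \<noteq> (\<lambda>j l. 0)"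
  proof
    assume "N = (\<lambda>j l. 0)"
    then have "\<rho> X v j = 0" for v j
      using A_linear_rep_matrix[OF rep X, of v j] by (simp add: N_def fun_eq_iff)
    then show False
      using nonzero unfolding X_def by (simp add: fun_eq_iff)
  qed
  ultimately show ?thesis
    using ad_eigenvalues_lowest_coeff[of N _ M] unfolding M_def by blast
qed

theorem lemma5p2:
  fixes \<rho> :: "('n::finite, 'k::field_char_0) vfield \<Rightarrow> ('m::finite \<Rightarrow> ('n, 'k) mpoly) \<Rightarrow> ('m \<Rightarrow> ('n, 'k) mpoly)"
  assumes "alg_closed_field TYPE('k)"
    and "A_linear_rep \<rho>"
  shows "\<forall>i. finite {k. k \<noteq> 0 \<and> \<rho> (monvf k i) \<noteq> (\<lambda>v j. 0)}"
proof
  fix i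
  define \<Lambda> where "\<Lambda> = ad_eigenvalues (\<lambda>j t. Poly_Mapping.lookup (\<rho> euler_field (ebasis t) j) 0)"
  have "finite ((\<lambda>d. of_nat d - 1) -` \<Lambda>)"
    unfolding \<Lambda>_def by (rule finite_vimageI[OF finite_ad_eigenvalues]) (simp add: inj_def)
  then obtain B where B: "\<And>d. of_nat d - 1 \<in> \<Lambda> \<Longrightarrow> d \<le> B"
    unfolding finite_nat_set_iff_bounded_le by auto
  have "{k. k \<noteq> 0 \<and> \<rho> (monvf k i) \<noteq> (\<lambda>v j. 0)} \<subseteq> {k. total_degree k \<le> B}"
    using B total_degree_ad_eigenvalue[OF assms(2)] unfolding \<Lambda>_def by blast
  then show "finite {k. k \<noteq> 0 \<and> \<rho> (monvf k i) \<noteq> (\<lambda>v j. 0)}"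
    using finite_total_degree_le finite_subset by blast
qed

end
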